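(* Let $H=\{H_a\}_{a\in\alpha}$ be an $\alpha$-family of subgroups of $\pi$. If two nanowords over $\alpha$ are homotopic, then their $H$-coverings are homotopic.
   Context: Fix a set $\alpha$ with an involution $\tau$. An $\alpha$-alphabet is a set $\mathcal A$ with a map $A\mapsto|A|\in\alpha$. A nanoword over $\alpha$ is a pair $(\mathcal A,w)$ with $\mathcal A$ a finite $\alpha$-alphabet and $w$ a word in which each letter occurs exactly twice. Nanowords are isomorphic if a bijection of alphabets preserving $|\cdot|$ carries one word letterwise to the other. Homotopy moves ($x,y,z,t$ words in the remaining letters; smaller alphabets carry the restricted projection): (1) $(\mathcal A,xAAy)\mapsto(\mathcal A\setminus\{A\},xy)$; (2) $(\mathcal A,xAByBAz)\mapsto(\mathcal A\setminus\{A,B\},xyz)$ if $|B|=\tau(|A|)$; (3) $(\mathcal A,xAByACzBCt)\mapsto(\mathcal A,xBAyCAzCBt)$ if $A,B,C$ distinct with $|A|=|B|=|C|$. Homotopy is generated by isomorphisms, these moves and their inverses. Let $\pi$ be the multiplicative abelian group generated by the elements of $\alpha$ with relations $a\,\tau(a)=1$. For $A,B\in\mathcal A$ let $n_w(A,B)=1$ if $w=\cdots A\cdots B\cdots A\cdots B\cdots$, $-1$ if $w=\cdots B\cdots A\cdots B\cdots A\cdots$, and $0$ otherwise, and $[A]_w=\prod_{B\in\mathcal A}|B|^{n_w(A,B)}\in\pi$. An $\alpha$-family of subgroups of $\pi$ is a family $\{H_a\subset\pi\}_{a\in\alpha}$ of subgroups with $H_a=H_{\tau(a)}$ for all $a$.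 The $H$-covering of $(\mathcal A,w)$ is the nanoword $(\mathcal A^H,w^H)$ obtained by deleting from both $\mathcal A$ and $w$ all letters $A$ with $[A]_w\notin H_{|A|}$. *)

theory Defs
  imports "HOL-Algebra.Free_Abelian_Groups" "HOL-Algebra.Generated_Groups" "HOL-Algebra.Coset"
begin

text \<open>pi is the abelian group generated by alpha subject to a * tau(a) = 1,
  realised as the quotient of the free abelian group on alpha (type 'a) by the
  subgroup generated by the elements a + tau(a) (additive notation in frags).\<close>

definition rel_subgroup :: "('a \<Rightarrow> 'a) \<Rightarrow> ('a \<Rightarrow>\<^sub>0 int) set" where
  "rel_subgroup \<tau> = generate (free_Abelian_group UNIV) {frag_of a + frag_of (\<tau> a) | a. True}"

definition pi_group :: "('a \<Rightarrow> 'a) \<Rightarrow> ('a \<Rightarrow>\<^sub>0 int) set monoid" where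
  "pi_group \<tau> = free_Abelian_group UNIV Mod rel_subgroup \<tau>"

definition pi_class :: "('a \<Rightarrow> 'a) \<Rightarrow> ('a \<Rightarrow>\<^sub>0 int) \<Rightarrow> ('a \<Rightarrow>\<^sub>0 int) set" where
  "pi_class \<tau> c = rel_subgroup \<tau> #>\<^bsub>free_Abelian_group UNIV\<^esub> c"

definition alpha_family :: "('a \<Rightarrow> 'a) \<Rightarrow> ('a \<Rightarrow> ('a \<Rightarrow>\<^sub>0 int) set set) \<Rightarrow> bool" where
  "alpha_family \<tau> H \<longleftrightarrow> (\<forall>a. subgroup (H a) (pi_group \<tau>) \<and> H a = H (\<tau> a))"

text \<open>A nanoword over alpha is a triple (A, p, w): a finite alphabet A (a set of
  letters of type 'b), the projection p (only its values on A matter), and a word w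
  in which each letter of A occurs exactly twice and no other letter occurs.\<close>

type_synonym ('b, 'a) nanoword = "'b set \<times> ('b \<Rightarrow> 'a) \<times> 'b list"

definition is_nanoword :: "('b, 'a) nanoword \<Rightarrow> bool" where
  "is_nanoword N = (case N of (A, p, w) \<Rightarrow>
      finite A \<and> set w \<subseteq> A \<and> (\<forall>X\<in>A. count_list w X = 2))"

definition nano_iso :: "('b, 'a) nanoword \<Rightarrow> ('b, 'a) nanoword \<Rightarrow> bool" where
  "nano_iso N M = (case N of (A, p, w) \<Rightarrow> case M of (A', p', w') \<Rightarrow>
      (\<exists>f. bij_betw f A A' \<and> (\<forall>X\<in>A. p' (f X) = p X) \<and> w' = map f w))"

inductive homotopy_move :: "('a \<Rightarrow> 'a) \<Rightarrow> ('b, 'a) nanoword \<Rightarrow> ('b, 'a) nanoword \<Rightarrow> bool"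
  for \<tau> :: "'a \<Rightarrow> 'a" where
  move1: "homotopy_move \<tau> (A, p, x @ [X, X] @ y) (A - {X}, p, x @ y)"
| move2: "p Y = \<tau> (p X) \<Longrightarrow>
    homotopy_move \<tau> (A, p, x @ [X, Y] @ y @ [Y, X] @ z) (A - {X, Y}, p, x @ y @ z)"
| move3: "distinct [X, Y, Z] \<Longrightarrow> p X = p Y \<Longrightarrow> p Y = p Z \<Longrightarrow>
    homotopy_move \<tau> (A, p, x @ [X, Y] @ y @ [X, Z] @ z @ [Y, Z] @ t)
                    (A, p, x @ [Y, X] @ y @ [Z, X] @ z @ [Z, Y] @ t)"

definition homotopy_step :: "('a \<Rightarrow> 'a) \<Rightarrow> ('b, 'a) nanoword \<Rightarrow> ('b, 'a) nanoword \<Rightarrow> bool" where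
  "homotopy_step \<tau> N M \<longleftrightarrow> is_nanoword N \<and> is_nanoword M \<and> (nano_iso N M \<or> homotopy_move \<tau> N M)"

definition homotopic :: "('a \<Rightarrow> 'a) \<Rightarrow> ('b, 'a) nanoword \<Rightarrow> ('b, 'a) nanoword \<Rightarrow> bool" where
  "homotopic \<tau> N M \<longleftrightarrow> (N, M) \<in> ({(P, Q). homotopy_step \<tau> P Q} \<union> {(P, Q). homotopy_step \<tau> Q P})\<^sup>*"

definition n_w :: "'b list \<Rightarrow> 'b \<Rightarrow> 'b \<Rightarrow> int" where
  "n_w w X Y =
    (if \<exists>x y z t u. w = x @ [X] @ y @ [Y] @ z @ [X] @ t @ [Y] @ u then 1
     else if \<exists>x y z t u. w = x @ [Y] @ y @ [X] @ z @ [Y] @ t @ [X] @ u then -1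
     else 0)"

text \<open>[X]_w = prod_{Y in A} |Y|^{n_w(X,Y)}, computed in the free abelian group and mapped to pi.\<close>
definition letter_class :: "('a \<Rightarrow> 'a) \<Rightarrow> ('b, 'a) nanoword \<Rightarrow> 'b \<Rightarrow> ('a \<Rightarrow>\<^sub>0 int) set" where
  "letter_class \<tau> N X = (case N of (A, p, w) \<Rightarrow>
      pi_class \<tau> (\<Sum>Y\<in>A. frag_cmul (n_w w X Y) (frag_of (p Y))))"

definition covering :: "('a \<Rightarrow> 'a) \<Rightarrow> ('a \<Rightarrow> ('a \<Rightarrow>\<^sub>0 int) set set) \<Rightarrow> ('b, 'a) nanoword \<Rightarrow> ('b, 'a) nanoword" where
  "covering \<tau> H N = (case N of (A, p, w) \<Rightarrow>
      let AH = {X \<in> A. letter_class \<tau> N X \<in> H (p X)} in (AH, p, filter (\<lambda>X. X \<in> AH) w))"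

end

theory Submission
  imports Defs "HOL-Library.Sublist"
begin

(* An isomorphism transports the classes.
   In move (1) the deleted letter has trivial class, so it is kept, and no other class changes.
   In move (2) the letters A and B have the same linking numbers with every letter, so
   [A]_w = [B]_w, and H_|A| = H_|B| because |B| = tau |A|: both letters are kept or both are
   deleted; any other class changes by a power of |A| tau(|A|) = 1.  In move (3) no class changes
   and [B]_w = [A]_w [C]_w with |A| = |B| = |C|, so as soon as two of A, B, C are kept, the third is
   kept as well.  Hence the two H-coverings are related by the same move (when all letters involved
   are kept) or coincide. *)

lemma (in group) subgroup_mult_iff_right:
  assumes "subgroup K G" "a \<in> K" "b \<in> carrier G"
  shows "a \<otimes> b \<in> K \<longleftrightarrow> b \<in> K"
proof
  assume "a \<otimes> b \<in> K"
  then have "inv a \<otimes> (a \<otimes> b) \<in> K"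
    using assms by (simp add: subgroup.m_closed subgroup.m_inv_closed)
  then show "b \<in> K"
    using assms subgroup.mem_carrier by (force simp: m_assoc[symmetric])
qed (use assms in \<open>simp add: subgroup.m_closed\<close>)

lemma (in group) subgroup_mult_iff_left:
  assumes "subgroup K G" "a \<in> carrier G" "b \<in> K"
  shows "a \<otimes> b \<in> K \<longleftrightarrow> a \<in> K"
proof
  assume "a \<otimes> b \<in> K"
  then have "(a \<otimes> b) \<otimes> inv b \<in> K"
    using assms by (simp add: subgroup.m_closed subgroup.m_inv_closed)
  then show "a \<in> K"
    using assms subgroup.mem_carrier by (force simp: m_assoc)
qed (use assms in \<open>simp add: subgroup.m_closed\<close>)

lemma rel_subgroup_normal: "rel_subgroup \<tau> \<lhd> free_Abelian_group UNIV"
  unfolding rel_subgroup_def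
  by (intro comm_group.subgroup_imp_normal abelian_free_Abelian_group group.generate_is_subgroup) auto

lemma relator_mem_rel_subgroup: "frag_of a + frag_of (\<tau> a) \<in> rel_subgroup \<tau>"
  unfolding rel_subgroup_def by (rule generate.incl) auto

lemma frag_cmul_mem_rel_subgroup:
  assumes "g \<in> rel_subgroup \<tau>"
  shows "frag_cmul n g \<in> rel_subgroup \<tau>"
  using group.subgroup_int_pow_closed[OF group_free_Abelian_group normal.axioms(1)[OF rel_subgroup_normal] assms, of n]
  by simp

lemma group_pi_group: "group (pi_group \<tau>)"
  unfolding pi_group_def by (rule normal.factorgroup_is_group[OF rel_subgroup_normal])

lemma pi_class_hom: "pi_class \<tau> \<in> hom (free_Abelian_group UNIV) (pi_group \<tau>)"
  unfolding pi_class_def pi_group_def by (rule normal.r_coset_hom_Mod[OF rel_subgroup_normal])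

lemma pi_class_carrier: "pi_class \<tau> c \<in> carrier (pi_group \<tau>)"
  using hom_in_carrier[OF pi_class_hom] by simp

lemma pi_class_add: "pi_class \<tau> (c + d) = pi_class \<tau> c \<otimes>\<^bsub>pi_group \<tau>\<^esub> pi_class \<tau> d"
  using hom_mult[OF pi_class_hom] by simp

lemma pi_class_zero: "pi_class \<tau> 0 = \<one>\<^bsub>pi_group \<tau>\<^esub>"
  using group_hom.hom_one[of "free_Abelian_group UNIV" "pi_group \<tau>" "pi_class \<tau>"]
  by (simp add: group_hom_def group_hom_axioms_def group_pi_group pi_class_hom)

lemma pi_class_add_rel:
  assumes "g \<in> rel_subgroup \<tau>"
  shows "pi_class \<tau> (g + c) = pi_class \<tau> c"
proof -
  have "pi_class \<tau> g = \<one>\<^bsub>pi_group \<tau>\<^esub>"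
    using subgroup.rcos_const[OF normal.axioms(1)[OF rel_subgroup_normal] group_free_Abelian_group assms]
    by (simp add: pi_class_def pi_group_def)
  then show ?thesis
    by (simp add: pi_class_add group.is_monoid[OF group_pi_group] pi_class_carrier)
qed

lemma subseq_Cons_iff: "subseq (a # xs) w \<longleftrightarrow> (\<exists>u v. w = u @ a # v \<and> subseq xs v)"
proof
  assume "subseq (a # xs) w"
  then show "\<exists>u v. w = u @ a # v \<and> subseq xs v" using list_emb_ConsD by fastforce
qed (auto intro: subseq_drop_many)

lemma subseq_filter_iff:
  assumes "\<forall>x\<in>set xs. P x"
  shows "subseq xs (filter P ys) \<longleftrightarrow> subseq xs ys"
  using assms subseq_filter[of xs ys P] subseq_order.order_trans[OF _ subseq_filter_left]
  by (auto simp: filter_id_conv)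

lemma subseq_map_iff:
  assumes "inj_on f (set xs \<union> set ys)"
  shows "subseq (map f xs) (map f ys) \<longleftrightarrow> subseq xs ys"
proof
  let ?g = "the_inv_into (set xs \<union> set ys) f"
  assume "subseq (map f xs) (map f ys)"
  then have "subseq (map ?g (map f xs)) (map ?g (map f ys))"
    by (rule subseq_map)
  moreover have "map ?g (map f zs) = zs" if "set zs \<subseteq> set xs \<union> set ys" for zs
    using that the_inv_into_f_f[OF assms] by (induction zs) auto
  ultimately show "subseq xs ys" by simp
qed (rule subseq_map)

lemma n_w_subseq:
  "n_w w X Y = (if subseq [X, Y, X, Y] w then 1 else if subseq [Y, X, Y, X] w then -1 else 0)"
proof -
  have "(\<exists>x y z t u. w = x @ [A] @ y @ [B] @ z @ [A] @ t @ [B] @ u) \<longleftrightarrow> subseq [A, B, A, B] w" for A B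
    by (simp add: subseq_Cons_iff) blast
  then show ?thesis unfolding n_w_def by simp
qed

lemma n_w_filter:
  assumes "X \<in> S" "Y \<in> S"
  shows "n_w (filter (\<lambda>c. c \<in> S) w) X Y = n_w w X Y"
  using assms by (simp add: n_w_subseq subseq_filter_iff)

lemma n_w_removeAll:
  assumes "X \<noteq> Z" "Y \<noteq> Z"
  shows "n_w (removeAll Z w) X Y = n_w w X Y"
proof -
  have "removeAll Z w = filter (\<lambda>c. c \<in> - {Z}) w" by (induction w) auto
  then show ?thesis using n_w_filter[of X "- {Z}" Y w] assms by simp
qed

lemma n_w_map:
  assumes "inj_on f (set w \<union> {X, Y})"
  shows "n_w (map f w) (f X) (f Y) = n_w w X Y"
proof -
  have "subseq (map f [U, V, U, V]) (map f w) \<longleftrightarrow> subseq [U, V, U, V] w"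
    if "U \<in> {X, Y}" "V \<in> {X, Y}" for U V
    by (rule subseq_map_iff, rule inj_on_subset[OF assms]) (use that in auto)
  from this[of X Y] this[of Y X] show ?thesis unfolding n_w_subseq by simp
qed

lemma n_w_self:
  assumes "count_list w X = 2"
  shows "n_w w X X = 0"
proof -
  have "filter (\<lambda>c. c \<in> {X}) w = replicate (count_list w X) X"
    by (induction w) auto
  then have "filter (\<lambda>c. c \<in> {X}) w = [X, X]"
    using assms by (simp add: numeral_2_eq_2)
  then show ?thesis using n_w_filter[of X "{X}" X w] by (simp add: n_w_subseq)
qed

lemma filter_disj_eq_replicate:
  "X \<notin> set l \<Longrightarrow> filter (\<lambda>c. c = X \<or> c = D) l = replicate (count_list l D) D"
  by (induction l) auto

lemma n_w_replicate:
  assumes "D \<noteq> X" "a + b + c = 2"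
  shows "n_w (replicate a D @ X # replicate b D @ X # replicate c D) X D
           = (if b = 1 then if a = 0 then 1 else -1 else 0)"
    and "n_w (replicate a D @ X # replicate b D @ X # replicate c D) D X
           = (if b = 1 then if a = 0 then -1 else 1 else 0)"
proof -
  have "(a, b, c) \<in> {(0, 0, 2), (0, 1, 1), (0, 2, 0), (1, 0, 1), (1, 1, 0), (2, 0, 0)}"
    using assms(2) by (simp, presburger)
  then show "n_w (replicate a D @ X # replicate b D @ X # replicate c D) X D
           = (if b = 1 then if a = 0 then 1 else -1 else 0)"
    and "n_w (replicate a D @ X # replicate b D @ X # replicate c D) D X
           = (if b = 1 then if a = 0 then -1 else 1 else 0)"
    using assms(1) by (auto simp: n_w_subseq numeral_2_eq_2)
qed

lemma n_w_two_occurrences: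
  assumes "X \<notin> set x" "X \<notin> set y" "X \<notin> set z" "D \<noteq> X" "count_list (x @ y @ z) D = 2"
  shows "n_w (x @ X # y @ X # z) X D
           = (if count_list y D = 1 then if count_list x D = 0 then 1 else -1 else 0)"
    and "n_w (x @ X # y @ X # z) D X = - n_w (x @ X # y @ X # z) X D"
proof -
  let ?w = "x @ X # y @ X # z"
  have "filter (\<lambda>c. c \<in> {X, D}) ?w
      = replicate (count_list x D) D @ X # replicate (count_list y D) D @ X # replicate (count_list z D) D"
    using assms(1-3) by (simp add: filter_disj_eq_replicate)
  then have "n_w ?w U V = n_w (replicate (count_list x D) D @ X # replicate (count_list y D) D @ X
      # replicate (count_list z D) D) U V" if "U \<in> {X, D}" "V \<in> {X, D}" for U V
    using n_w_filter[OF that, of ?w] by simp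
  then show "n_w ?w X D = (if count_list y D = 1 then if count_list x D = 0 then 1 else -1 else 0)"
    and "n_w ?w D X = - n_w ?w X D"
    using n_w_replicate[OF assms(4)] assms(5) by simp_all
qed

definition linking_sum :: "'b set \<Rightarrow> ('b \<Rightarrow> 'a) \<Rightarrow> 'b list \<Rightarrow> 'b \<Rightarrow> 'a \<Rightarrow>\<^sub>0 int" where
  "linking_sum A p w X = (\<Sum>Y\<in>A. frag_cmul (n_w w X Y) (frag_of (p Y)))"

definition covering_alphabet ::
    "('a \<Rightarrow> 'a) \<Rightarrow> ('a \<Rightarrow> ('a \<Rightarrow>\<^sub>0 int) set set) \<Rightarrow> 'b set \<Rightarrow> ('b \<Rightarrow> 'a) \<Rightarrow> 'b list \<Rightarrow> 'b set" where
  "covering_alphabet \<tau> H A p w = {X \<in> A. pi_class \<tau> (linking_sum A p w X) \<in> H (p X)}"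

lemma covering_eq:
  "covering \<tau> H (A, p, w)
     = (covering_alphabet \<tau> H A p w, p, filter (\<lambda>X. X \<in> covering_alphabet \<tau> H A p w) w)"
  by (simp add: covering_def letter_class_def linking_sum_def covering_alphabet_def Let_def)

lemma covering_eq_Diff:
  assumes "covering_alphabet \<tau> H A' p w' = K - D" "set w' \<inter> D = {}"
  shows "covering \<tau> H (A', p, w') = (K - D, p, filter (\<lambda>Z. Z \<in> K) w')"
proof -
  have "filter (\<lambda>Z. Z \<in> K - D) w' = filter (\<lambda>Z. Z \<in> K) w'"
    using assms(2) by (intro filter_cong) auto
  then show ?thesis unfolding covering_eq assms(1) by simp
qed

lemma linking_sum_split:
  assumes "finite A" "D \<subseteq> A"
  shows "linking_sum A p w X
           = (\<Sum>Y\<in>D. frag_cmul (n_w w X Y) (frag_of (p Y))) + linking_sum (A - D) p w X"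
  unfolding linking_sum_def using sum.subset_diff[OF assms(2,1)] by (simp add: add.commute)

lemma count_list_filter: "P X \<Longrightarrow> count_list (filter P w) X = count_list w X"
  by (induction w) auto

lemma is_nanoword_covering: "is_nanoword N \<Longrightarrow> is_nanoword (covering \<tau> H N)"
  by (cases N) (auto simp: is_nanoword_def covering_eq covering_alphabet_def count_list_filter
      intro: finite_subset)

lemma nano_iso_covering:
  assumes "is_nanoword N" "nano_iso N M"
  shows "nano_iso (covering \<tau> H N) (covering \<tau> H M)"
proof -
  obtain A p w A' p' w' where N: "N = (A, p, w)" and M: "M = (A', p', w')"
    by (cases N, cases M) auto
  obtain f where bij: "bij_betw f A A'" and p': "\<forall>X\<in>A. p' (f X) = p X" and w': "w' = map f w"
    using assms(2) unfolding N M nano_iso_def by auto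
  have "set w \<subseteq> A" using assms(1) unfolding N is_nanoword_def by auto
  then have "n_w w' (f X) (f Y) = n_w w X Y" if "X \<in> A" "Y \<in> A" for X Y
    unfolding w' using that by (intro n_w_map inj_on_subset[OF bij_betw_imp_inj_on[OF bij]]) auto
  then have "linking_sum A' p' w' (f X) = linking_sum A p w X" if "X \<in> A" for X
    unfolding linking_sum_def sum.reindex_bij_betw[OF bij, symmetric] using that p'
    by (intro sum.cong) auto
  then have kept: "f X \<in> covering_alphabet \<tau> H A' p' w' \<longleftrightarrow> X \<in> covering_alphabet \<tau> H A p w"
    if "X \<in> A" for X
    using that p' bij_betwE[OF bij] by (auto simp: covering_alphabet_def)
  have "f ` covering_alphabet \<tau> H A p w = covering_alphabet \<tau> H A' p' w'"
    using kept bij_betw_imp_surj_on[OF bij] by (auto simp: covering_alphabet_def)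
  then have "bij_betw f (covering_alphabet \<tau> H A p w) (covering_alphabet \<tau> H A' p' w')"
    using bij_betw_subset[OF bij] by (auto simp: covering_alphabet_def)
  moreover have "filter (\<lambda>X. X \<in> covering_alphabet \<tau> H A' p' w') w'
      = map f (filter (\<lambda>X. X \<in> covering_alphabet \<tau> H A p w) w)"
    using kept \<open>set w \<subseteq> A\<close> unfolding w' filter_map
    by (intro arg_cong[where f = "map f"] filter_cong) auto
  ultimately show ?thesis
    using p' unfolding N M covering_eq nano_iso_def by (auto simp: covering_alphabet_def)
qed

lemma linking_sum_move1:
  assumes "is_nanoword (A, p, x @ [X, X] @ y)"
  shows "linking_sum A p (x @ [X, X] @ y) X = 0"
    and "U \<in> A \<Longrightarrow> U \<noteq> X \<Longrightarrow> linking_sum A p (x @ [X, X] @ y) U = linking_sum (A - {X}) p (x @ y) U"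
proof -
  let ?w = "x @ [X, X] @ y"
  have "finite A" and "X \<in> A" and count: "\<And>U. U \<in> A \<Longrightarrow> count_list ?w U = 2"
    using assms unfolding is_nanoword_def by auto
  have "X \<notin> set x" "X \<notin> set y"
    using count[OF \<open>X \<in> A\<close>] by (auto simp: count_list_0_iff[symmetric])
  have unlinked: "n_w ?w X U = 0 \<and> n_w ?w U X = 0" if "U \<in> A" for U
  proof (cases "U = X")
    case True
    then show ?thesis using n_w_self[OF count[OF that]] by simp
  next
    case False
    then show ?thesis
      using n_w_two_occurrences[of X x "[]" y U] \<open>X \<notin> set x\<close> \<open>X \<notin> set y\<close> count[OF that] by simp
  qed
  then show "linking_sum A p ?w X = 0"
    unfolding linking_sum_def by simp
  assume "U \<in> A" "U \<noteq> X"
  have "linking_sum A p ?w U = linking_sum (A - {X}) p ?w U"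
    using linking_sum_split[OF \<open>finite A\<close>, of "{X}" p ?w U] unlinked[OF \<open>U \<in> A\<close>] \<open>X \<in> A\<close> by simp
  also have "\<dots> = linking_sum (A - {X}) p (x @ y) U"
    unfolding linking_sum_def using n_w_removeAll[OF \<open>U \<noteq> X\<close>, of _ ?w] \<open>X \<notin> set x\<close> \<open>X \<notin> set y\<close>
    by (intro sum.cong) auto
  finally show "linking_sum A p ?w U = linking_sum (A - {X}) p (x @ y) U" .
qed

lemma covering_move1:
  assumes "alpha_family \<tau> H" "is_nanoword (A, p, x @ [X, X] @ y)"
  shows "homotopy_move \<tau> (covering \<tau> H (A, p, x @ [X, X] @ y)) (covering \<tau> H (A - {X}, p, x @ y))"
proof -
  let ?w = "x @ [X, X] @ y"
  define K where "K = covering_alphabet \<tau> H A p ?w"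
  have "X \<in> A" and "count_list ?w X = 2"
    using assms(2) unfolding is_nanoword_def by auto
  then have "X \<notin> set x" "X \<notin> set y"
    by (auto simp: count_list_0_iff[symmetric])
  have "subgroup (H (p X)) (pi_group \<tau>)"
    using assms(1) by (simp add: alpha_family_def)
  then have "X \<in> K"
    using \<open>X \<in> A\<close> linking_sum_move1(1)[OF assms(2)]
    by (simp add: K_def covering_alphabet_def pi_class_zero subgroup.one_closed)
  then have "covering \<tau> H (A, p, ?w) = (K, p, filter (\<lambda>Z. Z \<in> K) x @ [X, X] @ filter (\<lambda>Z. Z \<in> K) y)"
    unfolding covering_eq K_def by simp
  moreover have "covering_alphabet \<tau> H (A - {X}) p (x @ y) = K - {X}"
    using linking_sum_move1(2)[OF assms(2)] by (auto simp: K_def covering_alphabet_def)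
  then have "covering \<tau> H (A - {X}, p, x @ y) = (K - {X}, p, filter (\<lambda>Z. Z \<in> K) (x @ y))"
    using \<open>X \<notin> set x\<close> \<open>X \<notin> set y\<close> by (intro covering_eq_Diff) auto
  ultimately show ?thesis
    using homotopy_move.move1[of \<tau> K p "filter (\<lambda>Z. Z \<in> K) x" X "filter (\<lambda>Z. Z \<in> K) y"] by simp
qed

lemma n_w_move2_parallel:
  assumes "X \<noteq> Y" "X \<notin> set (x @ y @ z)" "Y \<notin> set (x @ y @ z)"
    and "count_list (x @ [X, Y] @ y @ [Y, X] @ z) V = 2"
  shows "n_w (x @ [X, Y] @ y @ [Y, X] @ z) X V = n_w (x @ [X, Y] @ y @ [Y, X] @ z) Y V"
    and "n_w (x @ [X, Y] @ y @ [Y, X] @ z) V X = n_w (x @ [X, Y] @ y @ [Y, X] @ z) V Y"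
proof -
  let ?w = "x @ [X, Y] @ y @ [Y, X] @ z"
  have w_X: "?w = x @ X # (Y # y @ [Y]) @ X # z" and w_Y: "?w = (x @ [X]) @ Y # y @ Y # (X # z)"
    by simp_all
  have "n_w ?w X Y = 0" "n_w ?w Y X = 0"
    using n_w_two_occurrences[of X x "Y # y @ [Y]" z Y, folded w_X] assms(1-3) by simp_all
  moreover have "n_w ?w X X = 0" "n_w ?w Y Y = 0"
    using assms(1-3) by (simp_all add: n_w_self)
  moreover have "n_w ?w X V = n_w ?w Y V \<and> n_w ?w V X = n_w ?w V Y" if "V \<noteq> X" "V \<noteq> Y"
    using n_w_two_occurrences[of X x "Y # y @ [Y]" z V, folded w_X]
      n_w_two_occurrences[of Y "x @ [X]" y "X # z" V, folded w_Y] that assms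
    by simp
  ultimately show "n_w ?w X V = n_w ?w Y V" "n_w ?w V X = n_w ?w V Y"
    by (cases "V = X"; cases "V = Y"; simp)+
qed

lemma linking_sum_move2:
  assumes "is_nanoword (A, p, x @ [X, Y] @ y @ [Y, X] @ z)" "p Y = \<tau> (p X)"
    and "X \<noteq> Y" "X \<notin> set (x @ y @ z)" "Y \<notin> set (x @ y @ z)"
  defines "w \<equiv> x @ [X, Y] @ y @ [Y, X] @ z"
  shows "linking_sum A p w X = linking_sum A p w Y"
    and "U \<in> A \<Longrightarrow> U \<noteq> X \<Longrightarrow> U \<noteq> Y \<Longrightarrow>
      pi_class \<tau> (linking_sum A p w U) = pi_class \<tau> (linking_sum (A - {X, Y}) p (x @ y @ z) U)"
proof -
  have "finite A" and "X \<in> A" "Y \<in> A" and count: "\<And>V. V \<in> A \<Longrightarrow> count_list w V = 2"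
    using assms(1) unfolding is_nanoword_def w_def by auto
  note parallel = n_w_move2_parallel[OF assms(3-5), folded w_def]
  show "linking_sum A p w X = linking_sum A p w Y"
    unfolding linking_sum_def using parallel(1)[OF count] by (intro sum.cong) auto
  assume "U \<in> A" "U \<noteq> X" "U \<noteq> Y"
  have "removeAll Y (removeAll X w) = x @ y @ z"
    using assms(4,5) by (simp add: w_def)
  then have "n_w w U V = n_w (x @ y @ z) U V" if "V \<noteq> X" "V \<noteq> Y" for V
    using n_w_removeAll[of U Y V "removeAll X w"] n_w_removeAll[of U X V w] that \<open>U \<noteq> X\<close> \<open>U \<noteq> Y\<close>
    by simp
  then have "linking_sum (A - {X, Y}) p w U = linking_sum (A - {X, Y}) p (x @ y @ z) U"
    unfolding linking_sum_def by (intro sum.cong) auto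
  moreover have "linking_sum A p w U = frag_cmul (n_w w U X) (frag_of (p X) + frag_of (\<tau> (p X)))
      + linking_sum (A - {X, Y}) p w U"
    using linking_sum_split[OF \<open>finite A\<close>, of "{X, Y}" p w U] parallel(2)[OF count[OF \<open>U \<in> A\<close>]]
      \<open>X \<noteq> Y\<close> \<open>X \<in> A\<close> \<open>Y \<in> A\<close> assms(2)
    by (simp add: frag_cmul_distrib2)
  ultimately show "pi_class \<tau> (linking_sum A p w U) = pi_class \<tau> (linking_sum (A - {X, Y}) p (x @ y @ z) U)"
    by (simp add: pi_class_add_rel frag_cmul_mem_rel_subgroup relator_mem_rel_subgroup)
qed

lemma covering_move2:
  assumes "alpha_family \<tau> H" "p Y = \<tau> (p X)" "is_nanoword (A, p, x @ [X, Y] @ y @ [Y, X] @ z)"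
  defines "w \<equiv> x @ [X, Y] @ y @ [Y, X] @ z"
  shows "covering \<tau> H (A, p, w) = covering \<tau> H (A - {X, Y}, p, x @ y @ z)
    \<or> homotopy_move \<tau> (covering \<tau> H (A, p, w)) (covering \<tau> H (A - {X, Y}, p, x @ y @ z))"
proof -
  define K where "K = covering_alphabet \<tau> H A p w"
  have "X \<in> A" "Y \<in> A" "count_list w X = 2" "count_list w Y = 2"
    using assms(3) unfolding is_nanoword_def w_def by auto
  then have "X \<noteq> Y" and segments: "X \<notin> set (x @ y @ z)" "Y \<notin> set (x @ y @ z)"
    by (auto simp: w_def count_list_0_iff[symmetric] split: if_splits)
  note linking = linking_sum_move2[where \<tau> = \<tau> and A = A and p = p, OF assms(3,2) \<open>X \<noteq> Y\<close> segments,
      folded w_def]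
  have "H (p Y) = H (p X)"
    using assms(1,2) by (simp add: alpha_family_def)
  then have kept_together: "X \<in> K \<longleftrightarrow> Y \<in> K"
    using linking(1) \<open>X \<in> A\<close> \<open>Y \<in> A\<close> by (simp add: K_def covering_alphabet_def)
  have "covering_alphabet \<tau> H (A - {X, Y}) p (x @ y @ z) = K - {X, Y}"
    using linking(2) by (auto simp: K_def covering_alphabet_def)
  then have cov_M: "covering \<tau> H (A - {X, Y}, p, x @ y @ z) = (K - {X, Y}, p, filter (\<lambda>Z. Z \<in> K) (x @ y @ z))"
    using segments by (intro covering_eq_Diff) auto
  show ?thesis
  proof (cases "X \<in> K")
    case True
    then have "covering \<tau> H (A, p, w)
        = (K, p, filter (\<lambda>Z. Z \<in> K) x @ [X, Y] @ filter (\<lambda>Z. Z \<in> K) y @ [Y, X] @ filter (\<lambda>Z. Z \<in> K) z)"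
      using kept_together unfolding covering_eq K_def[symmetric] by (simp add: w_def)
    then show ?thesis
      using cov_M homotopy_move.move2[of p Y \<tau> X K "filter (\<lambda>Z. Z \<in> K) x" "filter (\<lambda>Z. Z \<in> K) y"
        "filter (\<lambda>Z. Z \<in> K) z"] assms(2) by simp
  next
    case False
    then have "covering \<tau> H (A, p, w) = (K - {X, Y}, p, filter (\<lambda>Z. Z \<in> K) (x @ y @ z))"
      using kept_together unfolding covering_eq K_def[symmetric] by (simp add: w_def)
    then show ?thesis
      using cov_M by simp
  qed
qed

lemma filter_move3:
  assumes "\<not> (P X \<and> P Y)" "\<not> (P X \<and> P Z)" "\<not> (P Y \<and> P Z)"
  shows "filter P (x @ [X, Y] @ y @ [X, Z] @ z @ [Y, Z] @ t)
       = filter P (x @ [Y, X] @ y @ [Z, X] @ z @ [Z, Y] @ t)"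
  using assms by (cases "P X"; cases "P Y"; cases "P Z") auto

lemma n_w_move3_outside:
  assumes "distinct [X, Y, Z]" "U \<notin> {X, Y, Z} \<or> V \<notin> {X, Y, Z}"
  shows "n_w (x @ [X, Y] @ y @ [X, Z] @ z @ [Y, Z] @ t) U V
       = n_w (x @ [Y, X] @ y @ [Z, X] @ z @ [Z, Y] @ t) U V"
proof -
  have "filter (\<lambda>c. c \<in> {U, V}) (x @ [X, Y] @ y @ [X, Z] @ z @ [Y, Z] @ t)
      = filter (\<lambda>c. c \<in> {U, V}) (x @ [Y, X] @ y @ [Z, X] @ z @ [Z, Y] @ t)"
    using assms by (intro filter_move3) auto
  then show ?thesis
    using n_w_filter[of U "{U, V}" V] by (metis insertCI)
qed

lemma n_w_move3_rows:
  assumes "distinct [X, Y, Z]" "{X, Y, Z} \<inter> set (x @ y @ z @ t) = {}"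
  defines "w \<equiv> x @ [X, Y] @ y @ [X, Z] @ z @ [Y, Z] @ t"
    and "w' \<equiv> x @ [Y, X] @ y @ [Z, X] @ z @ [Z, Y] @ t"
  shows "n_w w X X + n_w w X Y + n_w w X Z = 1" "n_w w' X X + n_w w' X Y + n_w w' X Z = 1"
    and "n_w w Y X + n_w w Y Y + n_w w Y Z = 0" "n_w w' Y X + n_w w' Y Y + n_w w' Y Z = 0"
    and "n_w w Z X + n_w w Z Y + n_w w Z Z = -1" "n_w w' Z X + n_w w' Z Y + n_w w' Z Z = -1"
proof -
  define S where "S = {X, Y, Z}"
  have "filter (\<lambda>c. c \<in> S) l = []" if "l \<in> {x, y, z, t}" for l
    using that assms(2) by (auto simp: S_def filter_empty_conv)
  then have "filter (\<lambda>c. c \<in> S) w = [X, Y, X, Z, Y, Z]" "filter (\<lambda>c. c \<in> S) w' = [Y, X, Z, X, Z, Y]"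
    by (simp_all add: w_def w'_def S_def[symmetric]) (simp_all add: S_def)
  then have restricted: "n_w w U V = n_w [X, Y, X, Z, Y, Z] U V" "n_w w' U V = n_w [Y, X, Z, X, Z, Y] U V"
    if "U \<in> S" "V \<in> S" for U V
    using n_w_filter[OF that, of w] n_w_filter[OF that, of w'] by simp_all
  have "X \<in> S" "Y \<in> S" "Z \<in> S"
    by (simp_all add: S_def)
  then show "n_w w X X + n_w w X Y + n_w w X Z = 1" "n_w w' X X + n_w w' X Y + n_w w' X Z = 1"
    and "n_w w Y X + n_w w Y Y + n_w w Y Z = 0" "n_w w' Y X + n_w w' Y Y + n_w w' Y Z = 0"
    and "n_w w Z X + n_w w Z Y + n_w w Z Z = -1" "n_w w' Z X + n_w w' Z Y + n_w w' Z Z = -1"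
    using assms(1) by (simp_all only: restricted) (auto simp: n_w_subseq)
qed

lemma n_w_move3_additive:
  assumes "distinct [X, Y, Z]" "{X, Y, Z} \<inter> set (x @ y @ z @ t) = {}" "D \<notin> {X, Y, Z}"
    and "count_list (x @ [X, Y] @ y @ [X, Z] @ z @ [Y, Z] @ t) D = 2"
  defines "w \<equiv> x @ [X, Y] @ y @ [X, Z] @ z @ [Y, Z] @ t"
  shows "n_w w Y D = n_w w X D + n_w w Z D"
proof -
  have "X \<noteq> D" "Y \<noteq> D" "Z \<noteq> D"
    using assms(3) by auto
  then show ?thesis
    using n_w_two_occurrences(1)[of X x "Y # y" "Z # z @ [Y, Z] @ t" D]
      n_w_two_occurrences(1)[of Y "x @ [X]" "y @ [X, Z] @ z" "Z # t" D]
      n_w_two_occurrences(1)[of Z "x @ [X, Y] @ y @ [X]" "z @ [Y]" t D]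
      assms(1,2,4)
    by (auto simp: w_def)
qed

lemma linking_sum_move3:
  assumes "is_nanoword (A, p, x @ [X, Y] @ y @ [X, Z] @ z @ [Y, Z] @ t)"
    and "distinct [X, Y, Z]" "p X = p Y" "p Y = p Z"
  defines "w \<equiv> x @ [X, Y] @ y @ [X, Z] @ z @ [Y, Z] @ t"
    and "w' \<equiv> x @ [Y, X] @ y @ [Z, X] @ z @ [Z, Y] @ t"
  shows "linking_sum A p w' U = linking_sum A p w U"
    and "linking_sum A p w Y = linking_sum A p w X + linking_sum A p w Z"
proof -
  define S where "S = {X, Y, Z}"
  have "finite A" "S \<subseteq> A" and count: "\<And>U. U \<in> A \<Longrightarrow> count_list w U = 2"
    using assms(1) unfolding is_nanoword_def w_def S_def by auto
  have "count_list w X = 2" "count_list w Y = 2" "count_list w Z = 2"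
    using count \<open>S \<subseteq> A\<close> by (simp_all add: S_def)
  then have segments: "S \<inter> set (x @ y @ z @ t) = {}"
    using assms(2) by (auto simp: S_def w_def count_list_0_iff[symmetric])
  note rows = n_w_move3_rows[OF assms(2) segments[unfolded S_def], folded w_def w'_def]
  have split: "linking_sum A p v U
      = frag_cmul (n_w v U X + n_w v U Y + n_w v U Z) (frag_of (p X)) + linking_sum (A - S) p v U" for v U
    using linking_sum_split[OF \<open>finite A\<close> \<open>S \<subseteq> A\<close>, of p v U] assms(2-4)
    by (simp add: S_def frag_cmul_distrib add.assoc)
  have outside: "n_w w' U V = n_w w U V" if "U \<notin> S \<or> V \<notin> S" for U V
    using n_w_move3_outside[OF assms(2), of U V x y z t] that by (simp add: S_def w_def w'_def)
  then have "linking_sum (A - S) p w' U = linking_sum (A - S) p w U" for U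
    unfolding linking_sum_def by (intro sum.cong) auto
  then show "linking_sum A p w' U = linking_sum A p w U"
    using split[of w U] split[of w' U] rows outside[of U] unfolding linking_sum_def
    by (cases "U \<in> S") (auto simp: S_def intro: sum.cong)
  have "n_w w Y D = n_w w X D + n_w w Z D" if "D \<in> A - S" for D
    using n_w_move3_additive[OF assms(2) segments[unfolded S_def]] that count by (simp add: S_def w_def)
  then have "linking_sum (A - S) p w Y
      = (\<Sum>D\<in>A - S. frag_cmul (n_w w X D) (frag_of (p D)) + frag_cmul (n_w w Z D) (frag_of (p D)))"
    unfolding linking_sum_def by (intro sum.cong) (auto simp: frag_cmul_distrib)
  then have "linking_sum (A - S) p w Y = linking_sum (A - S) p w X + linking_sum (A - S) p w Z"
    by (simp add: sum.distrib linking_sum_def)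
  then show "linking_sum A p w Y = linking_sum A p w X + linking_sum A p w Z"
    using split[of w Y] split[of w X] split[of w Z] rows by simp
qed

lemma covering_move3:
  assumes "alpha_family \<tau> H" "distinct [X, Y, Z]" "p X = p Y" "p Y = p Z"
    and "is_nanoword (A, p, x @ [X, Y] @ y @ [X, Z] @ z @ [Y, Z] @ t)"
  defines "w \<equiv> x @ [X, Y] @ y @ [X, Z] @ z @ [Y, Z] @ t"
    and "w' \<equiv> x @ [Y, X] @ y @ [Z, X] @ z @ [Z, Y] @ t"
  shows "covering \<tau> H (A, p, w) = covering \<tau> H (A, p, w')
    \<or> homotopy_move \<tau> (covering \<tau> H (A, p, w)) (covering \<tau> H (A, p, w'))"
proof -
  define K where "K = covering_alphabet \<tau> H A p w"
  note linking = linking_sum_move3[OF assms(5,2-4), folded w_def w'_def]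
  have same_alphabet: "covering_alphabet \<tau> H A p w' = K"
    using linking(1) by (simp add: K_def covering_alphabet_def)
  have class_Y: "pi_class \<tau> (linking_sum A p w Y)
      = pi_class \<tau> (linking_sum A p w X) \<otimes>\<^bsub>pi_group \<tau>\<^esub> pi_class \<tau> (linking_sum A p w Z)"
    using linking(2) by (simp add: pi_class_add)
  have sub: "subgroup (H (p X)) (pi_group \<tau>)"
    using assms(1) by (simp add: alpha_family_def)
  have "X \<in> A" "Y \<in> A" "Z \<in> A"
    using assms(5) unfolding is_nanoword_def by auto
  then have kept_iff: "U \<in> K \<longleftrightarrow> pi_class \<tau> (linking_sum A p w U) \<in> H (p X)" if "U \<in> {X, Y, Z}" for U
    using that assms(3,4) by (auto simp: K_def covering_alphabet_def)
  have "Y \<in> K \<longleftrightarrow> Z \<in> K" if "X \<in> K"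
    using that class_Y kept_iff group.subgroup_mult_iff_right[OF group_pi_group sub _ pi_class_carrier]
    by (metis insertCI)
  moreover have "Y \<in> K \<longleftrightarrow> X \<in> K" if "Z \<in> K"
    using that class_Y kept_iff group.subgroup_mult_iff_left[OF group_pi_group sub pi_class_carrier]
    by (metis insertCI)
  ultimately consider "X \<in> K" "Y \<in> K" "Z \<in> K"
    | "\<not> (X \<in> K \<and> Y \<in> K)" "\<not> (X \<in> K \<and> Z \<in> K)" "\<not> (Y \<in> K \<and> Z \<in> K)"
    by blast
  then show ?thesis
  proof cases
    case 1
    then have "homotopy_move \<tau> (K, p, filter (\<lambda>V. V \<in> K) w) (K, p, filter (\<lambda>V. V \<in> K) w')"
      using homotopy_move.move3[OF assms(2-4), of \<tau> K "filter (\<lambda>V. V \<in> K) x" "filter (\<lambda>V. V \<in> K) y"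
          "filter (\<lambda>V. V \<in> K) z" "filter (\<lambda>V. V \<in> K) t"]
      by (simp add: w_def w'_def)
    then show ?thesis
      unfolding covering_eq same_alphabet K_def[symmetric] by simp
  next
    case 2
    then show ?thesis
      using filter_move3[of "\<lambda>V. V \<in> K" X Y Z x y z t, folded w_def w'_def]
      unfolding covering_eq same_alphabet K_def[symmetric] by simp
  qed
qed

lemma homotopic_refl: "homotopic \<tau> N N"
  unfolding homotopic_def by simp

lemma homotopy_step_imp_homotopic: "homotopy_step \<tau> N M \<Longrightarrow> homotopic \<tau> N M"
  unfolding homotopic_def by auto

lemma homotopic_sym:
  assumes "homotopic \<tau> N M"
  shows "homotopic \<tau> M N"
proof -
  have "sym ({(P, Q). homotopy_step \<tau> P Q} \<union> {(P, Q). homotopy_step \<tau> Q P})"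
    by (auto intro: symI)
  then show ?thesis
    using assms sym_rtrancl unfolding homotopic_def by (blast dest: symD)
qed

lemma homotopic_trans: "homotopic \<tau> N M \<Longrightarrow> homotopic \<tau> M P \<Longrightarrow> homotopic \<tau> N P"
  unfolding homotopic_def by (rule rtrancl_trans)

lemma homotopic_image:
  assumes "\<And>P Q. homotopy_step \<tau> P Q \<Longrightarrow> homotopic \<tau>' (f P) (f Q)" "homotopic \<tau> N M"
  shows "homotopic \<tau>' (f N) (f M)"
proof -
  have "(N, M) \<in> ({(P, Q). homotopy_step \<tau> P Q} \<union> {(P, Q). homotopy_step \<tau> Q P})\<^sup>*"
    using assms(2) unfolding homotopic_def .
  then show ?thesis
  proof (induction rule: rtrancl_induct)
    case base
    show ?case by (rule homotopic_refl)
  next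
    case (step P Q)
    then show ?case
      using assms(1) homotopic_sym homotopic_trans by blast
  qed
qed

lemma covering_homotopy_move:
  assumes "alpha_family \<tau> H" "homotopy_move \<tau> N M" "is_nanoword N"
  shows "covering \<tau> H N = covering \<tau> H M \<or> homotopy_move \<tau> (covering \<tau> H N) (covering \<tau> H M)"
  using assms(2)
proof cases
  case (move1 A p x X y)
  then show ?thesis using covering_move1[OF assms(1), of A p x X y] assms(3) by simp
next
  case (move2 p Y X A x y z)
  then show ?thesis using covering_move2[OF assms(1), of p Y X A x y z] assms(3) by simp
next
  case (move3 X Y Z p A x y z t)
  then show ?thesis using covering_move3[OF assms(1), of X Y Z p A x y z t] assms(3) by simp
qed

lemma covering_homotopy_step:
  assumes "alpha_family \<tau> H" "homotopy_step \<tau> N M"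
  shows "homotopic \<tau> (covering \<tau> H N) (covering \<tau> H M)"
proof -
  have "is_nanoword N" "is_nanoword M" "nano_iso N M \<or> homotopy_move \<tau> N M"
    using assms(2) unfolding homotopy_step_def by auto
  then have "covering \<tau> H N = covering \<tau> H M
      \<or> homotopy_step \<tau> (covering \<tau> H N) (covering \<tau> H M)"
    using nano_iso_covering covering_homotopy_move[OF assms(1)] is_nanoword_covering
    unfolding homotopy_step_def by blast
  then show ?thesis
    using homotopic_refl homotopy_step_imp_homotopic by metis
qed

theorem lemma5p1:
  fixes \<tau> :: "'a \<Rightarrow> 'a"
    and H :: "'a \<Rightarrow> ('a \<Rightarrow>\<^sub>0 int) set set"
    and N M :: "('b, 'a) nanoword"
  assumes "\<And>a. \<tau> (\<tau> a) = a"
    and "alpha_family \<tau> H"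
    and "is_nanoword N" and "is_nanoword M"
    and "homotopic \<tau> N M"
  shows "homotopic \<tau> (covering \<tau> H N) (covering \<tau> H M)"
  using covering_homotopy_step[OF assms(2)] assms(5) by (rule homotopic_image)

end
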